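(* Assume $\sigma_1\equiv0$ and consider excess-of-loss reinsurance, with retention level $u\in[0,\infty]$, $m(t,y,u)=\theta\int_0^u\bar F(z)\,dz-(\theta-\eta)\mathbb E[Z]$ and $\sigma(t,y,u)=\sqrt{\int_0^u2z\bar F(z)\,dz}$. Then the optimal retention level is $$u^*(x)=\frac{\theta}{A(x)}.$$
   Context: $Z$ is a claim size with distribution function $F$ on $[0,\infty)$, $\bar F=1-F$, $\mathbb E[Z]<\infty$ and $F(z)<1$ for all $z\in[0,\infty)$; $\theta,\eta>0$ are the reinsurer's and the insurer's safety loadings. With retention $u_t$ and amount $a_t$ invested in a risky asset with drift $\mu(t,y)>0$ and volatility $\sigma_2(t,y)>0$ (driven by a Brownian motion $W^2$ independent of $W^1$; $\sigma_1\equiv0$), the surplus is $dX_t=\{m(t,Y_t,u_t)+a_t\mu(t,Y_t)\}dt+\sigma(t,Y_t,u_t)dW^1_t+a_t\sigma_2(t,Y_t)dW^2_t$, where $Y$ is an environmental diffusion, and the insurer maximises $\mathbb E[U(X_T)]$. The optimal retention is the maximiser in the HJB equation under the ansatz $V(t,x,y)=U(x)\tilde V(t,y)$ for the value function, i.e. the maximiser over $u\in[0,\infty]$ of $\theta\int_0^u\bar F(z)dz-\frac{A(x)}{2}\int_0^u2z\bar F(z)dz$. $U$ is a SAHARA utility: $A(x):=-U''(x)/U'(x)=\alpha/\sqrt{b^2+(x-d)^2}$, $\alpha>0$, $b>0$, $d\in\mathbb R$. *)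

theory Defs
  imports "HOL-Probability.Probability"
begin

definition claim_cdf :: "'s measure \<Rightarrow> ('s \<Rightarrow> real) \<Rightarrow> real \<Rightarrow> real" where
  "claim_cdf M Z z = measure M {\<omega> \<in> space M. Z \<omega> \<le> z}"

definition sahara_A :: "real \<Rightarrow> real \<Rightarrow> real \<Rightarrow> real \<Rightarrow> real" where
  "sahara_A \<alpha> b d x = \<alpha> / sqrt (b\<^sup>2 + (x - d)\<^sup>2)"

text \<open>Objective of the HJB maximisation for retention u in [0,\<infinity>] (encoded as extended real):
  theta * int_0^u Fbar(z) dz - A/2 * int_0^u 2 z Fbar(z) dz.
  Integrands are nonnegative, so nonnegative (Lebesgue) integrals are used; the second one
  may be +\<infinity> when u = \<infinity>, giving the value -\<infinity>.\<close>
definition retention_obj :: "(real \<Rightarrow> real) \<Rightarrow> real \<Rightarrow> real \<Rightarrow> ereal \<Rightarrow> ereal" where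
  "retention_obj F \<theta> A u =
     ereal \<theta> * enn2ereal (\<integral>\<^sup>+ z. ennreal (1 - F z) * indicator {z. 0 \<le> z \<and> ereal z \<le> u} z \<partial>lborel)
     - ereal (A / 2) * enn2ereal (\<integral>\<^sup>+ z. ennreal (2 * z * (1 - F z)) * indicator {z. 0 \<le> z \<and> ereal z \<le> u} z \<partial>lborel)"

end

theory Submission
  imports Defs
begin

(* Writing Fbar = 1 - F, the objective is the integral over [0, u] of (theta - A z) Fbar(z).
   Since Fbar > 0 on [0, oo), the integrand is positive below theta / A and negative above it.
   Passing from the retention theta / A to any other u adds or removes a layer on which the
   integrand has the unfavourable sign and is nonzero on an interval, so the objective strictly
   drops. Because the penalty part may be infinite when u = oo, the drift and the penalty are kept
   as separate nonnegative integrals and compared layer by layer; the drift is finite because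
   the integral of Fbar over [0, oo) is E[max Z 0]. *)

lemma nn_integral_survival_eq_positive_part:
  assumes "prob_space M" and Z_measurable[measurable]: "Z \<in> borel_measurable M"
  shows "(\<integral>\<^sup>+z\<in>{0..}. ennreal (1 - claim_cdf M Z z) \<partial>lborel) = (\<integral>\<^sup>+\<omega>. ennreal (Z \<omega>) \<partial>M)"
proof -
  interpret prob_space M by fact
  interpret pair_sigma_finite lborel M ..
  let ?below = "\<lambda>z \<omega>. indicator {0..<Z \<omega>} z :: ennreal"
  have [measurable]: "case_prod ?below \<in> borel_measurable (lborel \<Otimes>\<^sub>M M)"
    unfolding indicator_def atLeastLessThan_iff by measurable
  have survival: "ennreal (1 - claim_cdf M Z z) * indicator {0..} z = (\<integral>\<^sup>+\<omega>. ?below z \<omega> \<partial>M)" for z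
  proof (cases "0 \<le> z")
    case True
    have "{\<omega> \<in> space M. z < Z \<omega>} = space M - {\<omega> \<in> space M. Z \<omega> \<le> z}" by auto
    then have "prob {\<omega> \<in> space M. z < Z \<omega>} = 1 - claim_cdf M Z z"
      unfolding claim_cdf_def by (simp add: prob_compl)
    moreover have "(\<integral>\<^sup>+\<omega>. ?below z \<omega> \<partial>M) = (\<integral>\<^sup>+\<omega>. indicator {\<omega> \<in> space M. z < Z \<omega>} \<omega> \<partial>M)"
      using True by (intro nn_integral_cong) (auto simp: indicator_def)
    ultimately show ?thesis using True by (simp add: emeasure_eq_measure)
  qed simp
  have "(\<integral>\<^sup>+z\<in>{0..}. ennreal (1 - claim_cdf M Z z) \<partial>lborel)
      = (\<integral>\<^sup>+z. (\<integral>\<^sup>+\<omega>. ?below z \<omega> \<partial>M) \<partial>lborel)"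
    by (simp only: survival)
  also have "\<dots> = (\<integral>\<^sup>+\<omega>. (\<integral>\<^sup>+z. ?below z \<omega> \<partial>lborel) \<partial>M)"
    using Fubini'[of ?below] by simp
  also have "\<dots> = (\<integral>\<^sup>+\<omega>. ennreal (Z \<omega>) \<partial>M)"
  proof (intro nn_integral_cong)
    show "(\<integral>\<^sup>+z. ?below z \<omega> \<partial>lborel) = ennreal (Z \<omega>)" for \<omega>
      by (cases "0 \<le> Z \<omega>") (simp_all add: ennreal_neg)
  qed
  finally show ?thesis .
qed

lemma nn_integral_less_on_interval:
  fixes f g :: "real \<Rightarrow> ennreal"
  assumes [measurable]: "f \<in> borel_measurable borel" "g \<in> borel_measurable borel" "T \<in> sets borel"
    and finite: "(\<integral>\<^sup>+x\<in>T. f x \<partial>lborel) \<noteq> \<infinity>"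
    and le: "\<And>x. x \<in> T \<Longrightarrow> f x \<le> g x"
    and interval: "p < q" "{p<..<q} \<subseteq> T"
    and less: "\<And>x. p < x \<Longrightarrow> x < q \<Longrightarrow> f x < g x"
  shows "(\<integral>\<^sup>+x\<in>T. f x \<partial>lborel) < (\<integral>\<^sup>+x\<in>T. g x \<partial>lborel)"
proof (rule nn_integral_less)
  show "AE x in lborel. f x * indicator T x \<le> g x * indicator T x"
    using le by (intro AE_I2) (auto simp: indicator_def)
  show "\<not> (AE x in lborel. g x * indicator T x \<le> f x * indicator T x)"
  proof
    assume "AE x in lborel. g x * indicator T x \<le> f x * indicator T x"
    then have "AE x in lborel. x \<notin> {p<..<q}"
      by eventually_elim (use less interval(2) in \<open>force simp: not_le[symmetric]\<close>)
    then have "emeasure lborel {p<..<q} = 0"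
      by (subst (asm) AE_iff_measurable[of "{p<..<q}"]) auto
    with \<open>p < q\<close> show False by simp
  qed
qed (use finite in simp_all)

lemma enn2ereal_diff_less_diff:
  fixes a b a' b' :: ennreal
  assumes "a \<noteq> \<infinity>" "a' \<noteq> \<infinity>" "b' \<noteq> \<infinity>" and "a + b' < a' + b"
  shows "enn2ereal a - enn2ereal b < enn2ereal a' - enn2ereal b'"
proof (cases "b = \<infinity>")
  case False
  with assms show ?thesis
    by (cases a; cases b; cases a'; cases b') (auto simp: ennreal_plus[symmetric] ennreal_less_iff simp del: ennreal_plus)
qed (use assms in \<open>cases a; cases a'; cases b'; simp\<close>)

lemma retained_layer_split:
  assumes "0 \<le> r" "ereal r \<le> u"
  shows "{z. 0 \<le> z \<and> ereal z \<le> u} = {0..r} \<union> {z. r < z \<and> ereal z \<le> u}"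
  using assms by (auto intro: order_trans[of _ "ereal r"])

lemma retained_layer_ereal: "{z. 0 \<le> z \<and> ereal z \<le> ereal r} = {0..r}"
  by auto

locale retention_problem =
  fixes F :: "real \<Rightarrow> real" and \<theta> A :: real
  assumes F_measurable[measurable]: "F \<in> borel_measurable borel"
    and F_nonneg: "\<And>z. 0 \<le> F z"
    and F_less_one: "\<And>z. 0 \<le> z \<Longrightarrow> F z < 1"
    and survival_finite: "(\<integral>\<^sup>+z\<in>{0..}. ennreal (1 - F z) \<partial>lborel) \<noteq> \<infinity>"
    and loading_pos: "0 < \<theta>"
    and aversion_pos: "0 < A"
begin

definition drift :: "real set \<Rightarrow> ennreal" where
  "drift S = (\<integral>\<^sup>+z\<in>S. ennreal (\<theta> * (1 - F z)) \<partial>lborel)"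

definition risk_penalty :: "real set \<Rightarrow> ennreal" where
  "risk_penalty S = (\<integral>\<^sup>+z\<in>S. ennreal (A * z * (1 - F z)) \<partial>lborel)"

lemma retention_obj_eq_drift_minus_risk_penalty:
  "retention_obj F \<theta> A u
     = enn2ereal (drift {z. 0 \<le> z \<and> ereal z \<le> u}) - enn2ereal (risk_penalty {z. 0 \<le> z \<and> ereal z \<le> u})"
proof -
  have scale: "ereal c * enn2ereal (\<integral>\<^sup>+z\<in>S. ennreal (f z) \<partial>lborel) = enn2ereal (\<integral>\<^sup>+z\<in>S. ennreal (c * f z) \<partial>lborel)"
    if "0 \<le> c" and [measurable]: "f \<in> borel_measurable borel" "S \<in> sets borel" for c f S
  proof -
    have "ereal c * enn2ereal (\<integral>\<^sup>+z\<in>S. ennreal (f z) \<partial>lborel) = enn2ereal (ennreal c * (\<integral>\<^sup>+z\<in>S. ennreal (f z) \<partial>lborel))"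
      using \<open>0 \<le> c\<close> by (simp add: times_ennreal.rep_eq)
    also have "\<dots> = enn2ereal (\<integral>\<^sup>+z\<in>S. ennreal (c * f z) \<partial>lborel)"
      using \<open>0 \<le> c\<close> by (simp add: nn_integral_cmult[symmetric] ennreal_mult' mult.assoc)
    finally show ?thesis .
  qed
  have "{z. 0 \<le> z \<and> ereal z \<le> u} \<in> sets borel" by measurable
  then show ?thesis
    unfolding retention_obj_def drift_def risk_penalty_def
    using loading_pos aversion_pos by (simp add: scale mult.assoc)
qed

lemma survival_pos: "0 \<le> z \<Longrightarrow> 0 < 1 - F z"
  using F_less_one by simp

lemma drift_finite:
  assumes [measurable]: "S \<in> sets borel" and "S \<subseteq> {0..}"
  shows "drift S \<noteq> \<infinity>"
proof -
  have "drift S \<le> (\<integral>\<^sup>+z\<in>{0..}. ennreal \<theta> * ennreal (1 - F z) \<partial>lborel)"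
    unfolding drift_def using \<open>S \<subseteq> {0..}\<close> loading_pos
    by (intro nn_integral_mono) (auto simp: indicator_def ennreal_mult')
  also have "\<dots> = ennreal \<theta> * (\<integral>\<^sup>+z\<in>{0..}. ennreal (1 - F z) \<partial>lborel)"
    by (simp add: nn_integral_cmult[symmetric] mult.assoc)
  also have "\<dots> < \<infinity>"
    using survival_finite by (simp add: ennreal_mult_less_top less_top)
  finally show ?thesis by simp
qed

lemma risk_penalty_finite:
  assumes [measurable]: "S \<in> sets borel" and "S \<subseteq> {0..r}"
  shows "risk_penalty S \<noteq> \<infinity>"
proof -
  have "risk_penalty S \<le> (\<integral>\<^sup>+z\<in>{0..r}. ennreal (A * r) \<partial>lborel)"
    unfolding risk_penalty_def
  proof (intro nn_integral_mono)
    fix z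
    have "A * z * (1 - F z) \<le> A * r" if "z \<in> {0..r}"
    proof -
      have "z * (1 - F z) \<le> r"
        using that mult_left_le[of "1 - F z" z] F_nonneg[of z] by auto
      then show ?thesis using aversion_pos by (simp add: mult.assoc)
    qed
    then show "ennreal (A * z * (1 - F z)) * indicator S z \<le> ennreal (A * r) * indicator {0..r} z"
      using \<open>S \<subseteq> {0..r}\<close> by (auto simp: indicator_def ennreal_leI)
  qed
  also have "\<dots> = ennreal (A * r) * emeasure lborel {0..r}"
    by (rule nn_integral_cmult_indicator) simp
  also have "\<dots> < \<infinity>"
    by (cases "0 \<le> r") (simp_all add: ennreal_mult_less_top)
  finally show ?thesis by simp
qed

lemma drift_Un:
  "S \<in> sets borel \<Longrightarrow> T \<in> sets borel \<Longrightarrow> S \<inter> T = {} \<Longrightarrow> drift (S \<union> T) = drift S + drift T"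
  unfolding drift_def by (rule nn_integral_disjoint_pair) simp_all

lemma risk_penalty_Un:
  "S \<in> sets borel \<Longrightarrow> T \<in> sets borel \<Longrightarrow> S \<inter> T = {} \<Longrightarrow> risk_penalty (S \<union> T) = risk_penalty S + risk_penalty T"
  unfolding risk_penalty_def by (rule nn_integral_disjoint_pair) simp_all

lemma drift_density_le_iff:
  assumes "0 \<le> z"
  shows "ennreal (\<theta> * (1 - F z)) \<le> ennreal (A * z * (1 - F z)) \<longleftrightarrow> \<theta> / A \<le> z"
proof -
  have "0 < 1 - F z" using survival_pos \<open>0 \<le> z\<close> .
  then have "ennreal (\<theta> * (1 - F z)) \<le> ennreal (A * z * (1 - F z)) \<longleftrightarrow> \<theta> \<le> A * z"
    using aversion_pos \<open>0 \<le> z\<close> by (simp add: ennreal_le_iff)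
  also have "\<dots> \<longleftrightarrow> \<theta> / A \<le> z"
    using aversion_pos by (simp add: pos_divide_le_eq mult.commute)
  finally show ?thesis .
qed

lemma drift_density_less_iff:
  assumes "0 \<le> z"
  shows "ennreal (\<theta> * (1 - F z)) < ennreal (A * z * (1 - F z)) \<longleftrightarrow> \<theta> / A < z"
proof -
  have "0 < 1 - F z" using survival_pos \<open>0 \<le> z\<close> .
  then have "ennreal (\<theta> * (1 - F z)) < ennreal (A * z * (1 - F z)) \<longleftrightarrow> \<theta> < A * z"
    using aversion_pos loading_pos \<open>0 \<le> z\<close> by (auto simp: ennreal_less_iff)
  also have "\<dots> \<longleftrightarrow> \<theta> / A < z"
    using aversion_pos by (simp add: pos_divide_less_eq mult.commute)
  finally show ?thesis .
qed

lemma drift_less_risk_penalty: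
  assumes [measurable]: "T \<in> sets borel" and "T \<subseteq> {\<theta> / A..}"
    and "\<theta> / A \<le> p" "p < q" "{p<..<q} \<subseteq> T"
  shows "drift T < risk_penalty T"
  unfolding drift_def risk_penalty_def
proof (rule nn_integral_less_on_interval)
  have "{\<theta> / A..} \<subseteq> {0..}"
    using divide_pos_pos[OF loading_pos aversion_pos] by auto
  with \<open>T \<subseteq> {\<theta> / A..}\<close> have "T \<subseteq> {0..}" by (rule order_trans)
  then show "(\<integral>\<^sup>+z\<in>T. ennreal (\<theta> * (1 - F z)) \<partial>lborel) \<noteq> \<infinity>"
    using drift_finite[of T] by (simp add: drift_def)
  show "ennreal (\<theta> * (1 - F z)) \<le> ennreal (A * z * (1 - F z))" if "z \<in> T" for z
    using that \<open>T \<subseteq> {0..}\<close> \<open>T \<subseteq> {\<theta> / A..}\<close> by (subst drift_density_le_iff) auto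
  show "ennreal (\<theta> * (1 - F z)) < ennreal (A * z * (1 - F z))" if "p < z" "z < q" for z
    using that \<open>{p<..<q} \<subseteq> T\<close> \<open>T \<subseteq> {0..}\<close> \<open>\<theta> / A \<le> p\<close>
    by (subst drift_density_less_iff) auto
qed (use assms in simp_all)

lemma risk_penalty_less_drift:
  assumes [measurable]: "T \<in> sets borel" and "T \<subseteq> {0..\<theta> / A}"
    and "p < q" "q \<le> \<theta> / A" "{p<..<q} \<subseteq> T"
  shows "risk_penalty T < drift T"
  unfolding drift_def risk_penalty_def
proof (rule nn_integral_less_on_interval)
  show "(\<integral>\<^sup>+z\<in>T. ennreal (A * z * (1 - F z)) \<partial>lborel) \<noteq> \<infinity>"
    using risk_penalty_finite[of T "\<theta> / A"] \<open>T \<subseteq> {0..\<theta> / A}\<close> by (simp add: risk_penalty_def)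
  show "ennreal (A * z * (1 - F z)) \<le> ennreal (\<theta> * (1 - F z))" if "z \<in> T" for z
  proof -
    have "0 \<le> z" "z \<le> \<theta> / A" using that \<open>T \<subseteq> {0..\<theta> / A}\<close> by auto
    then show ?thesis using drift_density_less_iff[of z] by (meson not_less)
  qed
  show "ennreal (A * z * (1 - F z)) < ennreal (\<theta> * (1 - F z))" if "p < z" "z < q" for z
  proof -
    have "z \<in> T" using that \<open>{p<..<q} \<subseteq> T\<close> by auto
    then have "0 \<le> z" "z < \<theta> / A" using that \<open>T \<subseteq> {0..\<theta> / A}\<close> \<open>q \<le> \<theta> / A\<close> by auto
    then show ?thesis using drift_density_le_iff[of z] by (meson not_le)
  qed
qed (use assms in simp_all)

lemma retention_obj_ereal:
  "retention_obj F \<theta> A (ereal r) = enn2ereal (drift {0..r}) - enn2ereal (risk_penalty {0..r})"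
  unfolding retention_obj_eq_drift_minus_risk_penalty retained_layer_ereal ..

lemma retention_obj_less_above_optimal:
  assumes "ereal (\<theta> / A) < u"
  shows "retention_obj F \<theta> A u < retention_obj F \<theta> A (ereal (\<theta> / A))"
proof -
  define c where "c = \<theta> / A"
  have "0 < c" unfolding c_def using loading_pos aversion_pos by simp
  have drift_c: "drift {0..c} \<noteq> \<infinity>" by (rule drift_finite) auto
  have penalty_c: "risk_penalty {0..c} \<noteq> \<infinity>" by (rule risk_penalty_finite) auto
  define T where "T = {z. c < z \<and> ereal z \<le> u}"
  have T_sets: "T \<in> sets borel" unfolding T_def by measurable
  have disjoint: "{0..c} \<inter> T = {}" by (auto simp: T_def)
  obtain q where "c < q" "ereal q < u" using ereal_dense2[OF assms] unfolding c_def by auto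
  have "{c<..<q} \<subseteq> T"
  proof
    fix z assume "z \<in> {c<..<q}"
    then have "ereal z < ereal q" by simp
    also note \<open>ereal q < u\<close>
    finally have "ereal z < u" .
    with \<open>z \<in> {c<..<q}\<close> show "z \<in> T" by (simp add: T_def)
  qed
  with \<open>c < q\<close> have T_less: "drift T < risk_penalty T"
    by (intro drift_less_risk_penalty[OF T_sets]) (auto simp: T_def c_def)
  have drift_T: "drift T \<noteq> \<infinity>"
    using \<open>0 < c\<close> by (intro drift_finite) (auto simp: T_def)
  have "{z. 0 \<le> z \<and> ereal z \<le> u} = {0..c} \<union> T"
    unfolding T_def using \<open>0 < c\<close> assms by (intro retained_layer_split) (auto simp: c_def)
  then have "retention_obj F \<theta> A u
      = enn2ereal (drift {0..c} + drift T) - enn2ereal (risk_penalty {0..c} + risk_penalty T)"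
    by (simp add: retention_obj_eq_drift_minus_risk_penalty drift_Un risk_penalty_Un T_sets disjoint)
  also have "\<dots> < enn2ereal (drift {0..c}) - enn2ereal (risk_penalty {0..c})"
  proof (rule enn2ereal_diff_less_diff)
    show "drift {0..c} + drift T + risk_penalty {0..c} < drift {0..c} + (risk_penalty {0..c} + risk_penalty T)"
      using drift_c penalty_c T_less ennreal_add_left_cancel_less[of "drift {0..c} + risk_penalty {0..c}"]
      by (simp add: ac_simps)
  qed (use drift_c penalty_c drift_T in simp_all)
  finally show ?thesis by (simp add: retention_obj_ereal c_def)
qed

lemma retention_obj_less_below_optimal:
  assumes "0 \<le> r" "r < \<theta> / A"
  shows "retention_obj F \<theta> A (ereal r) < retention_obj F \<theta> A (ereal (\<theta> / A))"
proof -
  define c where "c = \<theta> / A"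
  define T where "T = {r<..c}"
  have T_sets: "T \<in> sets borel" by (simp add: T_def)
  have disjoint: "{0..r} \<inter> T = {}" by (auto simp: T_def)
  have T_less: "risk_penalty T < drift T"
    using assms by (intro risk_penalty_less_drift[OF T_sets, of r c]) (auto simp: T_def c_def)
  have drift_T: "drift T \<noteq> \<infinity>"
    using \<open>0 \<le> r\<close> by (intro drift_finite[OF T_sets]) (auto simp: T_def)
  have penalty_T: "risk_penalty T \<noteq> \<infinity>"
    using \<open>0 \<le> r\<close> by (intro risk_penalty_finite[OF T_sets, of c]) (auto simp: T_def)
  have drift_r: "drift {0..r} \<noteq> \<infinity>" by (rule drift_finite) auto
  have penalty_r: "risk_penalty {0..r} \<noteq> \<infinity>" by (rule risk_penalty_finite) auto
  have "retention_obj F \<theta> A (ereal r) = enn2ereal (drift {0..r}) - enn2ereal (risk_penalty {0..r})"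
    by (rule retention_obj_ereal)
  also have "\<dots> < enn2ereal (drift {0..r} + drift T) - enn2ereal (risk_penalty {0..r} + risk_penalty T)"
  proof (rule enn2ereal_diff_less_diff)
    show "drift {0..r} + (risk_penalty {0..r} + risk_penalty T) < drift {0..r} + drift T + risk_penalty {0..r}"
      using drift_r penalty_r T_less ennreal_add_left_cancel_less[of "drift {0..r} + risk_penalty {0..r}"]
      by (simp add: ac_simps)
  qed (use drift_r penalty_r drift_T penalty_T in simp_all)
  also have "\<dots> = retention_obj F \<theta> A (ereal (\<theta> / A))"
  proof -
    have "{0..c} = {0..r} \<union> T"
      unfolding T_def c_def using assms by auto
    then show ?thesis
      by (simp add: retention_obj_ereal c_def[symmetric] drift_Un risk_penalty_Un T_sets disjoint)
  qed
  finally show ?thesis .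
qed

theorem retention_obj_less_optimal:
  assumes "0 \<le> u" "u \<noteq> ereal (\<theta> / A)"
  shows "retention_obj F \<theta> A u < retention_obj F \<theta> A (ereal (\<theta> / A))"
proof (cases u)
  case (real r)
  with assms show ?thesis
    by (cases "r < \<theta> / A") (auto intro: retention_obj_less_below_optimal retention_obj_less_above_optimal)
qed (use assms retention_obj_less_above_optimal in auto)

end

lemma sahara_A_pos: "0 < \<alpha> \<Longrightarrow> 0 < b \<Longrightarrow> 0 < sahara_A \<alpha> b d x"
  unfolding sahara_A_def by (simp add: add_pos_nonneg)

lemma retention_problem_claim_cdf:
  assumes "prob_space M" and Z_measurable[measurable]: "Z \<in> borel_measurable M"
    and "integrable M Z" and "\<forall>z\<ge>0. claim_cdf M Z z < 1" and "0 < \<theta>" "0 < A"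
  shows "retention_problem (claim_cdf M Z) \<theta> A"
proof
  interpret prob_space M by fact
  have "mono (claim_cdf M Z)"
    unfolding claim_cdf_def by (intro monoI finite_measure_mono) auto
  then show "claim_cdf M Z \<in> borel_measurable borel" by (rule borel_measurable_mono)
  show "0 \<le> claim_cdf M Z z" for z by (simp add: claim_cdf_def)
  have "(\<integral>\<^sup>+\<omega>. ennreal (Z \<omega>) \<partial>M) \<le> (\<integral>\<^sup>+\<omega>. ennreal (norm (Z \<omega>)) \<partial>M)"
    by (intro nn_integral_mono ennreal_leI) simp
  also have "\<dots> < \<infinity>" using \<open>integrable M Z\<close> by (simp add: integrable_iff_bounded)
  finally show "(\<integral>\<^sup>+z\<in>{0..}. ennreal (1 - claim_cdf M Z z) \<partial>lborel) \<noteq> \<infinity>"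
    by (simp add: nn_integral_survival_eq_positive_part[OF \<open>prob_space M\<close> Z_measurable])
qed (use assms in auto)

theorem corollary5p8:
  fixes M :: "'s measure" and Z :: "'s \<Rightarrow> real"
    and \<theta> \<eta> \<alpha> b d :: real
  assumes "prob_space M"
    and "Z \<in> borel_measurable M"
    and "AE \<omega> in M. 0 \<le> Z \<omega>"
    and "integrable M Z"
    and "\<forall>z\<ge>0. claim_cdf M Z z < 1"
    and "\<theta> > 0" and "\<eta> > 0"
    and "\<alpha> > 0" and "b > 0"
  shows "\<forall>x. \<forall>u::ereal. 0 \<le> u \<and> u \<noteq> ereal (\<theta> / sahara_A \<alpha> b d x) \<longrightarrow>
           retention_obj (claim_cdf M Z) \<theta> (sahara_A \<alpha> b d x) u
             < retention_obj (claim_cdf M Z) \<theta> (sahara_A \<alpha> b d x) (ereal (\<theta> / sahara_A \<alpha> b d x))"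
proof (intro allI impI, elim conjE)
  fix x and u :: ereal
  assume "0 \<le> u" "u \<noteq> ereal (\<theta> / sahara_A \<alpha> b d x)"
  have "retention_problem (claim_cdf M Z) \<theta> (sahara_A \<alpha> b d x)"
    using assms sahara_A_pos by (intro retention_problem_claim_cdf) auto
  then show "retention_obj (claim_cdf M Z) \<theta> (sahara_A \<alpha> b d x) u
      < retention_obj (claim_cdf M Z) \<theta> (sahara_A \<alpha> b d x) (ereal (\<theta> / sahara_A \<alpha> b d x))"
    using \<open>0 \<le> u\<close> \<open>u \<noteq> _\<close> by (rule retention_problem.retention_obj_less_optimal)
qed

end
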